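(* Let $\lambda$ be an integer partition of length $k$ with $\lambda^{\perp B}\neq\emptyset$. Then $\lambda$ is novel if and only if the matrix $A^{(\lambda)}$ has rank $k-1$ and $\gcd(\lambda_1,\dots,\lambda_k)=1$.
   Context: An integer partition is $\lambda=(\lambda_1,\dots,\lambda_k)$ with integers $\lambda_1\ge\dots\ge\lambda_k\ge 1$; $k$ is its length. For $v\in\mathbb{Z}^k$ let $v^{\perp B}=\{x\in\{-1,1\}^k: v\cdot x=0\}$; for a partition, $\lambda^{\perp B}$ is this set for $(\lambda_1,\dots,\lambda_k)$. If $|\lambda^{\perp B}|=2p>0$, $A^{(\lambda)}$ is the $k\times p$ matrix whose columns are the elements of $\lambda^{\perp B}$ with first coordinate $+1$. $V_\lambda\subset\mathbb{Z}^k$ is the set of vectors obtained from $(\lambda_1,\dots,\lambda_k)$ by permuting coordinates and changing signs of some coordinates, with first coordinate positive. For $I\subset\{1,\dots,m\}$, $\mathrm{Proj}_I:\{-1,1\}^m\to\{-1,1\}^{|I|}$ keeps the coordinates indexed by $I$. Reduction: for partitions $\mu$ of length $m$ and $\lambda$ of length $k\le m$, $\mu\Rightarrow\lambda$ iff there exist $I\subset\{1,\dots,m\}$, $|I|=k$, and $v\in V_\lambda$ with $\mathrm{Proj}_I(\mu^{\perp B})\subset v^{\perp B}$. $\mu$ strictly reduces to $\lambda$ iff $\mu\Rightarrow\lambda$ and not $\lambda\Rightarrow\mu$. Partitions $\lambda,\mu$ of the same length are equivalent iff there is $w\in V_\mu$ with $\lambda^{\perp B}=w^{\perp B}$. A partition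 $\lambda$ is novel iff $\lambda^{\perp B}\neq\emptyset$, $\lambda$ strictly reduces to no partition, and $\lambda$ is lexicographically smallest among partitions equivalent to it. *)

theory Defs
  imports "Jordan_Normal_Form.DL_Rank"
begin

text \<open>Vectors in Z^k are integer lists of length k; coordinates are indexed 0..k-1.\<close>

definition is_partition :: "int list \<Rightarrow> bool" where
  "is_partition l \<longleftrightarrow> l \<noteq> [] \<and> sorted_wrt (\<ge>) l \<and> (\<forall>x\<in>set l. x \<ge> 1)"

definition dotp :: "int list \<Rightarrow> int list \<Rightarrow> int" where
  "dotp v x = (\<Sum>i<length v. v ! i * x ! i)"

definition perpB :: "int list \<Rightarrow> int list set" where
  "perpB v = {x. length x = length v \<and> set x \<subseteq> {-1, 1} \<and> dotp v x = 0}"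

definition Acols :: "int list \<Rightarrow> int list set" where
  "Acols l = {x \<in> perpB l. x ! 0 = 1}"

text \<open>The k x p matrix A^(lambda) (over the reals); the order of the columns is arbitrary
  (any enumeration without repetition), which does not affect the rank.\<close>
definition Amat :: "int list \<Rightarrow> real mat" where
  "Amat l = (let cs = (SOME cs. distinct cs \<and> set cs = Acols l)
             in mat (length l) (length cs) (\<lambda>(i, j). real_of_int (cs ! j ! i)))"

definition Vset :: "int list \<Rightarrow> int list set" where
  "Vset l = {v. length v = length l \<and>
     (\<exists>\<sigma> \<epsilon>. \<sigma> permutes {..<length l} \<and> (\<forall>i<length l. \<epsilon> i \<in> {-1, 1} \<and> v ! i = \<epsilon> i * l ! (\<sigma> i)))
     \<and> v ! 0 > 0}"

definition Proj :: "nat set \<Rightarrow> int list \<Rightarrow> int list" where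
  "Proj I x = nths x I"

definition reduces :: "int list \<Rightarrow> int list \<Rightarrow> bool" where
  "reduces mu la \<longleftrightarrow> length la \<le> length mu \<and>
     (\<exists>I v. I \<subseteq> {..<length mu} \<and> card I = length la \<and> v \<in> Vset la \<and>
        Proj I ` perpB mu \<subseteq> perpB v)"

definition strictly_reduces :: "int list \<Rightarrow> int list \<Rightarrow> bool" where
  "strictly_reduces mu la \<longleftrightarrow> reduces mu la \<and> \<not> reduces la mu"

definition equivalent :: "int list \<Rightarrow> int list \<Rightarrow> bool" where
  "equivalent la mu \<longleftrightarrow> length la = length mu \<and> (\<exists>w\<in>Vset mu. perpB la = perpB w)"

definition lex_le :: "int list \<Rightarrow> int list \<Rightarrow> bool" where
  "lex_le a b \<longleftrightarrow> a = b \<or> (\<exists>i<min (length a) (length b). take i a = take i b \<and> a ! i < b ! i)"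

definition novel :: "int list \<Rightarrow> bool" where
  "novel la \<longleftrightarrow> perpB la \<noteq> {} \<and>
     \<not> (\<exists>mu. is_partition mu \<and> strictly_reduces la mu) \<and>
     (\<forall>mu. is_partition mu \<and> equivalent mu la \<longrightarrow> lex_le la mu)"

end

theory Submission
  imports Defs
begin

(*
  Call perpB la rigid if every integer vector orthogonal to all of perpB la is proportional
  to la. All columns of A^(la) lie in the hyperplane orthogonal to la, so rank A^(la) < k, and
  rigidity is exactly the statement that this hyperplane is spanned by the columns: an integer
  vector orthogonal to perpB la but not proportional to la, projected away from la, shows that
  the rank is at most k - 2; conversely, when the rank is at most k - 2, a nonzero integer vector
  orthogonal to la and to a basis of the column space (a kernel vector of a singular integer
  matrix) violates rigidity.

  Novelty is rigidity plus gcd 1. A vector orthogonal to perpB la and not proportional to la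
  can be combined with la so as to vanish in some coordinate; its support yields a strict
  reduction to a shorter partition. Dividing la by its gcd gives an equivalent, lexicographically
  smaller partition. Conversely, under rigidity a reduction of la to a shorter partition would
  give a vector orthogonal to perpB la with a zero coordinate, and a reduction to, or an
  equivalence with, a partition of the same length forces that partition, being sorted, to be a
  positive rational multiple of la; when gcd la = 1 it is then an integer multiple of la.
*)

section \<open>Dot products of integer lists\<close>

lemma dotp_commute: "length a = length b \<Longrightarrow> dotp a b = dotp b a"
  unfolding dotp_def by (simp add: mult.commute)

lemma dotp_mult_eq:
  assumes "length a = length b" "\<forall>i<length a. p * a!i = q * b!i"
  shows "p * dotp a x = q * dotp b x"
proof -
  have "p * dotp a x = (\<Sum>i<length a. (p * a!i) * x!i)"
    unfolding dotp_def by (simp add: sum_distrib_left mult.assoc)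
  also have "\<dots> = (\<Sum>i<length a. (q * b!i) * x!i)" using assms(2) by simp
  also have "\<dots> = q * dotp b x"
    unfolding dotp_def using assms(1) by (simp add: sum_distrib_left mult.assoc)
  finally show ?thesis .
qed

lemma dotp_linear_combination:
  "length u = length v \<Longrightarrow>
   dotp (map (\<lambda>t. a * u!t - b * v!t) [0..<length v]) x = a * dotp u x - b * dotp v x"
  unfolding dotp_def by (simp add: sum_subtractf sum_distrib_left algebra_simps)

lemma dotp_self_pos:
  assumes "i < length w" "w!i \<noteq> 0"
  shows "dotp w w > 0"
proof -
  have "w!i * w!i \<le> (\<Sum>t<length w. w!t * w!t)"
    by (rule member_le_sum) (use assms in auto)
  moreover have "w!i * w!i > 0" using assms(2) by (auto simp: zero_less_mult_iff linorder_neq_iff)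
  ultimately show ?thesis unfolding dotp_def by linarith
qed

lemma dotp_nths:
  "length a = length b \<Longrightarrow>
   dotp (nths a I) (nths b I) = (\<Sum>t | t < length a \<and> t \<in> I. a!t * b!t)"
proof (induction a arbitrary: b rule: rev_induct)
  case Nil
  then show ?case by (simp add: dotp_def)
next
  case (snoc x a)
  obtain b' y where b: "b = b' @ [y]" and lb: "length b' = length a"
    using snoc.prems by (cases b rule: rev_cases) auto
  have split: "{t. t < length (a @ [x]) \<and> t \<in> I} =
      {t. t < length a \<and> t \<in> I} \<union> (if length a \<in> I then {length a} else {})"
    by (auto simp: less_Suc_eq)
  have "dotp (nths (a @ [x]) I) (nths b I) =
      dotp (nths a I) (nths b' I) + (if length a \<in> I then x * y else 0)"
    unfolding b dotp_def using lb by (simp add: nths_append length_nths nth_append)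
  also have "\<dots> = (\<Sum>t | t < length (a @ [x]) \<and> t \<in> I. (a @ [x])!t * b!t)"
    unfolding split snoc.IH[OF lb[symmetric]] b
    by (auto simp: nth_append lb intro!: sum.cong)
  finally show ?case .
qed

lemma dotp_nths_eq_if_zero_outside:
  assumes "length u = length x" "\<forall>t<length u. t \<notin> I \<longrightarrow> u!t = 0"
  shows "dotp (nths u I) (nths x I) = dotp u x"
proof -
  have "dotp (nths u I) (nths x I) = (\<Sum>t | t < length u \<and> t \<in> I. u!t * x!t)"
    using dotp_nths assms(1) by blast
  also have "\<dots> = (\<Sum>t<length u. u!t * x!t)"
    by (rule sum.mono_neutral_left) (use assms(2) in auto)
  finally show ?thesis unfolding dotp_def .
qed

lemma exists_zero_extension:
  assumes "I \<subseteq> {..<n}" "length v = card I"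
  shows "\<exists>u. length u = n \<and> nths u I = v \<and> (\<forall>t<n. t \<notin> I \<longrightarrow> u!t = 0)"
  using assms
proof (induction n arbitrary: I v)
  case 0
  then show ?case by auto
next
  case (Suc n)
  have restrict: "nths u J = nths u (J - {n})" if "length u = n" for u :: "'a list" and J
    using that by (auto simp: nths_def intro!: arg_cong[where f="map fst"] filter_cong simp: set_zip)
  show ?case
  proof (cases "n \<in> I")
    case True
    have fin: "finite I" using Suc.prems(1) finite_subset by blast
    have "card I = Suc (card (I - {n}))" using True fin by (metis card_Suc_Diff1)
    then obtain v' a where v: "v = v' @ [a]" and lv': "length v' = card (I - {n})"
      using Suc.prems(2) by (cases v rule: rev_cases) auto
    have "I - {n} \<subseteq> {..<n}" using Suc.prems(1) by (auto simp: less_Suc_eq)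
    from Suc.IH[OF this lv'] obtain u where u: "length u = n" "nths u (I - {n}) = v'"
        "\<forall>t<n. t \<notin> I - {n} \<longrightarrow> u!t = 0" by blast
    have "nths (u @ [a]) I = v"
      using u True v restrict[OF u(1)] by (simp add: nths_append)
    moreover have "\<forall>t<Suc n. t \<notin> I \<longrightarrow> (u @ [a])!t = 0"
      using u(1,3) True by (auto simp: nth_append less_Suc_eq)
    ultimately show ?thesis using u(1) by (intro exI[of _ "u @ [a]"]) auto
  next
    case False
    then have "I \<subseteq> {..<n}" using Suc.prems(1) by (auto simp: less_Suc_eq)
    from Suc.IH[OF this Suc.prems(2)] obtain u where u: "length u = n" "nths u I = v"
        "\<forall>t<n. t \<notin> I \<longrightarrow> u!t = 0" by blast
    have "nths (u @ [0]) I = v" using u False by (simp add: nths_append)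
    moreover have "\<forall>t<Suc n. t \<notin> I \<longrightarrow> (u @ [0])!t = 0"
      using u(1,3) by (auto simp: nth_append less_Suc_eq)
    ultimately show ?thesis using u(1) by (intro exI[of _ "u @ [0]"]) auto
  qed
qed

section \<open>Signed permutations\<close>

definition signed_perm :: "(nat \<Rightarrow> nat) \<Rightarrow> (nat \<Rightarrow> int) \<Rightarrow> int list \<Rightarrow> int list" where
  "signed_perm \<sigma> \<epsilon> l = map (\<lambda>i. \<epsilon> i * l!(\<sigma> i)) [0..<length l]"

lemma length_signed_perm [simp]: "length (signed_perm \<sigma> \<epsilon> l) = length l"
  unfolding signed_perm_def by simp

lemma nth_signed_perm [simp]: "i < length l \<Longrightarrow> signed_perm \<sigma> \<epsilon> l ! i = \<epsilon> i * l!(\<sigma> i)"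
  unfolding signed_perm_def by simp

lemma in_Vset_iff:
  "v \<in> Vset l \<longleftrightarrow> v!0 > 0 \<and> (\<exists>\<sigma> \<epsilon>. \<sigma> permutes {..<length l} \<and>
     (\<forall>i<length l. \<epsilon> i \<in> {-1, 1}) \<and> v = signed_perm \<sigma> \<epsilon> l)"
proof -
  have "(length v = length l \<and> (\<forall>i<length l. \<epsilon> i \<in> {-1, 1} \<and> v ! i = \<epsilon> i * l ! (\<sigma> i))) \<longleftrightarrow>
        (\<forall>i<length l. \<epsilon> i \<in> {-1, 1}) \<and> v = signed_perm \<sigma> \<epsilon> l" for \<sigma> \<epsilon>
  proof
    assume "length v = length l \<and> (\<forall>i<length l. \<epsilon> i \<in> {-1, 1} \<and> v ! i = \<epsilon> i * l ! (\<sigma> i))"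
    then show "(\<forall>i<length l. \<epsilon> i \<in> {-1, 1}) \<and> v = signed_perm \<sigma> \<epsilon> l"
      by (simp add: list_eq_iff_nth_eq)
  next
    assume "(\<forall>i<length l. \<epsilon> i \<in> {-1, 1}) \<and> v = signed_perm \<sigma> \<epsilon> l"
    then show "length v = length l \<and> (\<forall>i<length l. \<epsilon> i \<in> {-1, 1} \<and> v ! i = \<epsilon> i * l ! (\<sigma> i))"
      by simp
  qed
  then show ?thesis unfolding Vset_def by blast
qed

lemma sign_mult_self: "e \<in> {-1, 1} \<Longrightarrow> e * (e * x) = (x::int)"
  by auto

lemma dotp_signed_perm:
  assumes \<sigma>: "\<sigma> permutes {..<length a}" and \<epsilon>: "\<forall>i<length a. \<epsilon> i \<in> {-1, 1}"
    and "length b = length a"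
  shows "dotp (signed_perm \<sigma> \<epsilon> a) (signed_perm \<sigma> \<epsilon> b) = dotp a b"
proof -
  have "dotp (signed_perm \<sigma> \<epsilon> a) (signed_perm \<sigma> \<epsilon> b) = (\<Sum>i<length a. a!(\<sigma> i) * b!(\<sigma> i))"
    unfolding dotp_def
  proof (rule sum.cong)
    fix i assume "i \<in> {..<length a}"
    then have "i < length a" by simp
    then show "signed_perm \<sigma> \<epsilon> a ! i * signed_perm \<sigma> \<epsilon> b ! i = a!(\<sigma> i) * b!(\<sigma> i)"
      using assms(3) sign_mult_self[of "\<epsilon> i" "a!(\<sigma> i) * b!(\<sigma> i)"] \<epsilon>
      by (simp add: mult.assoc mult.left_commute)
  qed simp
  also have "\<dots> = dotp a b"
    unfolding dotp_def using sum.permute[OF \<sigma>, of "\<lambda>t. a!t * b!t"] by (simp add: comp_def)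
  finally show ?thesis .
qed

lemma signed_perm_perpB:
  assumes \<sigma>: "\<sigma> permutes {..<length a}" and \<epsilon>: "\<forall>i<length a. \<epsilon> i \<in> {-1, 1}"
    and x: "x \<in> perpB a"
  shows "signed_perm \<sigma> \<epsilon> x \<in> perpB (signed_perm \<sigma> \<epsilon> a)"
proof -
  have lx: "length x = length a" and sx: "set x \<subseteq> {-1, 1}" and dx: "dotp a x = 0"
    using x unfolding perpB_def by auto
  have "signed_perm \<sigma> \<epsilon> x ! i \<in> {-1, 1}" if "i < length x" for i
  proof -
    have "\<sigma> i < length x" using permutes_in_image[OF \<sigma>] that lx by simp
    then have "x!(\<sigma> i) \<in> {-1, 1}" using sx nth_mem by blast
    then show ?thesis using \<epsilon> that lx by auto
  qed
  then have "set (signed_perm \<sigma> \<epsilon> x) \<subseteq> {-1, 1}"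
    by (metis in_set_conv_nth length_signed_perm subsetI)
  then show ?thesis
    unfolding perpB_def using dotp_signed_perm[OF \<sigma> \<epsilon> lx] dx lx by simp
qed

lemma signed_perm_inverse:
  assumes \<sigma>: "\<sigma> permutes {..<length a}" and \<epsilon>: "\<forall>i<length a. \<epsilon> i \<in> {-1, 1}"
  shows "signed_perm \<sigma> \<epsilon> (signed_perm (Hilbert_Choice.inv \<sigma>) (\<epsilon> \<circ> Hilbert_Choice.inv \<sigma>) a) = a"
    (is "?l = a")
proof (rule nth_equalityI)
  fix i assume "i < length ?l"
  then have i: "i < length a" by simp
  then have "\<sigma> i < length a" using permutes_in_image[OF \<sigma>] by simp
  then show "?l ! i = a ! i"
    using i sign_mult_self[of "\<epsilon> i" "a!i"] \<epsilon> by (simp add: permutes_inverses(2)[OF \<sigma>])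
qed simp

section \<open>Partitions and proportional vectors\<close>

lemma partition_nth_pos: "is_partition la \<Longrightarrow> i < length la \<Longrightarrow> la!i \<ge> 1"
  unfolding is_partition_def by (simp add: nth_mem)

lemma partition_length_pos: "is_partition la \<Longrightarrow> length la > 0"
  unfolding is_partition_def by simp

lemma partition_in_Vset: "is_partition la \<Longrightarrow> la \<in> Vset la"
proof -
  assume P: "is_partition la"
  have "signed_perm id (\<lambda>_. 1) la = la" by (rule nth_equalityI) simp_all
  moreover have "la!0 > 0" using partition_nth_pos[OF P partition_length_pos[OF P]] by simp
  ultimately show ?thesis unfolding in_Vset_iff by (metis permutes_id insert_iff)
qed

lemma partition_dotp_self_pos: "is_partition la \<Longrightarrow> dotp la la > 0"
  using dotp_self_pos[of 0 la] partition_nth_pos partition_length_pos by fastforce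

lemma sorted_eq_if_scaled_perm:
  fixes la mu :: "int list"
  assumes "sorted_wrt (\<ge>) la" "sorted_wrt (\<ge>) mu" "length mu = length la"
    and p: "p permutes {..<length la}" and "a > 0" "c > 0"
    and "\<forall>t<length la. a * mu!(p t) = c * la!t"
  shows "\<forall>t<length la. a * mu!t = c * la!t"
proof -
  let ?A = "map ((*) a) mu" and ?B = "map ((*) c) la"
  have "permute_list p ?A = ?B"
  proof (rule nth_equalityI)
    fix t assume "t < length (permute_list p ?A)"
    then have "t < length la" "p t < length la" using assms(3) permutes_in_image[OF p] by auto
    then show "permute_list p ?A ! t = ?B ! t"
      using assms(3,7) p by (simp add: permute_list_nth)
  qed (use assms(3) in simp)
  then have "mset ?A = mset ?B" by (metis assms(3) length_map mset_permute_list p)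
  moreover have "sorted (rev ?A)" "sorted (rev ?B)"
    unfolding sorted_wrt_rev sorted_wrt_map using assms(1,2,5,6)
    by (auto elim!: sorted_wrt_mono_rel[rotated])
  ultimately have "rev ?A = rev ?B" by (metis mset_rev properties_for_sort sorted_sort_id)
  then have "?A = ?B" by simp
  then show ?thesis using assms(3) by (metis length_map nth_map)
qed

lemma perpB_eq_if_scaled:
  assumes "length a = length b" "p \<noteq> 0" "q \<noteq> 0" "\<forall>i<length a. p * a!i = q * b!i"
  shows "perpB a = perpB b"
proof -
  have "p * dotp a x = q * dotp b x" for x using dotp_mult_eq assms(1,4) by blast
  then have "dotp a x = 0 \<longleftrightarrow> dotp b x = 0" for x using assms(2,3) by (metis mult_eq_0_iff)
  then show ?thesis unfolding perpB_def using assms(1) by auto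
qed

lemma reduces_if_perpB_eq:
  assumes "is_partition la" "length mu = length la" "perpB mu = perpB la"
  shows "reduces mu la"
proof -
  have "Proj {..<length la} x = x" if "x \<in> perpB mu" for x
    using that assms(2) unfolding Proj_def perpB_def by (simp add: nths_upt_eq_take)
  then have "Proj {..<length la} ` perpB mu \<subseteq> perpB la" using assms(3) by auto
  then show ?thesis
    unfolding reduces_def using partition_in_Vset[OF assms(1)] assms(2) by force
qed

lemma lex_le_if_nth0_less: "0 < length a \<Longrightarrow> 0 < length b \<Longrightarrow> a!0 < b!0 \<Longrightarrow> lex_le a b"
  unfolding lex_le_def by (intro disjI2 exI[of _ 0]) simp

lemma not_lex_le_if_nth0_less:
  assumes "b!0 < a!0"
  shows "\<not> lex_le a b"
proof
  assume "lex_le a b"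
  then consider "a = b" | i where "i < min (length a) (length b)" "take i a = take i b" "a!i < b!i"
    unfolding lex_le_def by blast
  then show False
  proof cases
    case (2 i)
    show False
    proof (cases "i = 0")
      case False
      then have "take i a ! 0 = take i b ! 0" using 2(2) by simp
      then show False using False assms by simp
    qed (use 2 assms in simp)
  qed (use assms in simp)
qed

definition proportional :: "int list \<Rightarrow> int list \<Rightarrow> bool" where
  "proportional u v \<longleftrightarrow> (\<forall>i<length v. \<forall>j<length v. u!i * v!j = u!j * v!i)"

lemma proportional_signed_perm_scale:
  assumes P: "is_partition la" and Pm: "is_partition mu" and lmu: "length mu = length la"
    and \<sigma>: "\<sigma> permutes {..<length la}" and \<epsilon>: "\<forall>i<length la. \<epsilon> i \<in> {-1, 1}"
    and pr: "proportional (signed_perm \<sigma> \<epsilon> mu) la"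
  shows "\<forall>t<length la. la!0 * mu!t = mu!(\<sigma> 0) * la!t"
proof -
  have k0: "0 < length la" using partition_length_pos[OF P] .
  have abs_u: "\<bar>signed_perm \<sigma> \<epsilon> mu ! t\<bar> = mu!(\<sigma> t)" if "t < length la" for t
  proof -
    have "\<sigma> t < length la" using permutes_in_image[OF \<sigma>] that by simp
    then have "mu!(\<sigma> t) \<ge> 1" using partition_nth_pos[OF Pm] lmu by simp
    then show ?thesis using \<epsilon> that lmu by (auto simp: abs_mult)
  qed
  have "la!0 * mu!(\<sigma> t) = mu!(\<sigma> 0) * la!t" if t: "t < length la" for t
  proof -
    have "signed_perm \<sigma> \<epsilon> mu ! t * la!0 = signed_perm \<sigma> \<epsilon> mu ! 0 * la!t"
      using pr t k0 unfolding proportional_def by blast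
    then have "\<bar>signed_perm \<sigma> \<epsilon> mu ! t\<bar> * \<bar>la!0\<bar> = \<bar>signed_perm \<sigma> \<epsilon> mu ! 0\<bar> * \<bar>la!t\<bar>"
      by (metis abs_mult)
    moreover have "\<bar>la!0\<bar> = la!0" "\<bar>la!t\<bar> = la!t"
      using partition_nth_pos[OF P k0] partition_nth_pos[OF P t] by simp_all
    ultimately show ?thesis using abs_u[OF t] abs_u[OF k0] by (simp add: mult.commute)
  qed
  moreover have "mu!(\<sigma> 0) > 0"
    using partition_nth_pos[OF Pm] permutes_in_image[OF \<sigma>] k0 lmu by fastforce
  moreover have "la!0 > 0" using partition_nth_pos[OF P k0] by simp
  ultimately show ?thesis
    using sorted_eq_if_scaled_perm[OF _ _ lmu \<sigma>] P Pm unfolding is_partition_def by blast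
qed

lemma proportional_orth_eq_0:
  assumes P: "is_partition la" and lu: "length u = length la"
    and pr: "proportional u la" and d: "dotp u la = 0"
  shows "\<forall>j<length la. u!j = 0"
proof (intro allI impI)
  fix j assume j: "j < length la"
  have "la!j * dotp u la = (\<Sum>i<length la. u!i * la!j * la!i)"
    unfolding dotp_def lu by (simp add: sum_distrib_left algebra_simps)
  also have "\<dots> = (\<Sum>i<length la. u!j * (la!i * la!i))"
    using pr j unfolding proportional_def by (intro sum.cong) (auto simp: algebra_simps)
  also have "\<dots> = u!j * dotp la la" unfolding dotp_def by (simp add: sum_distrib_left)
  finally have "u!j * dotp la la = 0" using d by simp
  moreover have "dotp la la > 0" using partition_dotp_self_pos[OF P] .
  ultimately show "u!j = 0" by simp
qed

section \<open>Novel partitions\<close>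

definition perpB_rigid :: "int list \<Rightarrow> bool" where
  "perpB_rigid la \<longleftrightarrow>
     (\<forall>u. length u = length la \<and> (\<forall>x\<in>perpB la. dotp u x = 0) \<longrightarrow> proportional u la)"

lemma Vset_sorted_abs:
  fixes z :: "int list"
  defines "mu \<equiv> rev (sort (map abs z))"
  assumes "z \<noteq> []" "0 \<notin> set z"
  shows "is_partition mu" "map ((*) (sgn (z!0))) z \<in> Vset mu"
proof -
  have nz: "z!t \<noteq> 0" if "t < length z" for t using assms(3) that nth_mem by fastforce
  have lmu: "length mu = length z" unfolding mu_def by simp
  have "\<forall>x\<in>set mu. x \<ge> 1"
    unfolding mu_def using assms(3) by (auto simp: int_one_le_iff_zero_less)
  moreover have "mu \<noteq> []" using assms(2) lmu by auto
  ultimately show "is_partition mu"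
    unfolding is_partition_def by (simp add: mu_def sorted_wrt_rev)
  obtain p where p: "p permutes {..<length mu}" "permute_list p mu = map abs z"
    using mset_eq_permutation[of "map abs z" mu] unfolding mu_def by auto
  define \<epsilon> where "\<epsilon> t = sgn (z!0) * sgn (z!t)" for t
  have "map ((*) (sgn (z!0))) z = signed_perm p \<epsilon> mu"
  proof (rule nth_equalityI)
    fix t assume "t < length (map ((*) (sgn (z!0))) z)"
    then have t: "t < length z" by simp
    have "mu!(p t) = \<bar>z!t\<bar>" using p t lmu by (metis length_map nth_map permute_list_nth)
    then show "map ((*) (sgn (z!0))) z ! t = signed_perm p \<epsilon> mu ! t"
      using t lmu unfolding \<epsilon>_def by (simp add: sgn_mult_abs mult.assoc)
  qed (simp add: lmu)
  moreover have "\<forall>t<length mu. \<epsilon> t \<in> {-1, 1}"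
    using nz assms(2) lmu unfolding \<epsilon>_def by (auto simp: sgn_if)
  moreover have "map ((*) (sgn (z!0))) z ! 0 > 0"
    using nz[of 0] assms(2) by (auto simp: sgn_if)
  ultimately show "map ((*) (sgn (z!0))) z \<in> Vset mu"
    unfolding in_Vset_iff using p(1) by blast
qed

lemma reduces_to_support:
  assumes lw: "length w = length la" and ort: "\<forall>x\<in>perpB la. dotp w x = 0"
    and nz: "\<exists>t<length la. w!t \<noteq> 0"
  shows "\<exists>mu. is_partition mu \<and> length mu = card {t. t < length la \<and> w!t \<noteq> 0} \<and> reduces la mu"
proof -
  define J where "J = {t. t < length la \<and> w!t \<noteq> 0}"
  define z where "z = nths w J"
  define mu where "mu = rev (sort (map abs z))"
  define v where "v = map ((*) (sgn (z!0))) z"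
  have J: "{t. t < length la \<and> t \<in> J} = J" unfolding J_def by auto
  have lz: "length z = card J" unfolding z_def length_nths lw J ..
  have "J \<noteq> {}" "finite J" using nz unfolding J_def by auto
  then have "z \<noteq> []" using lz by auto
  moreover have "0 \<notin> set z" unfolding z_def set_nths J_def by auto
  ultimately have Pmu: "is_partition mu" and vV: "v \<in> Vset mu"
    using Vset_sorted_abs unfolding mu_def v_def by blast+
  have "Proj J ` perpB la \<subseteq> perpB v"
  proof
    fix y assume "y \<in> Proj J ` perpB la"
    then obtain x where x: "x \<in> perpB la" and y: "y = nths x J" unfolding Proj_def by auto
    have lx: "length x = length la" and sx: "set x \<subseteq> {-1, 1}" using x unfolding perpB_def by auto
    have "length y = card J" unfolding y length_nths lx J ..
    moreover have "set y \<subseteq> {-1, 1}" unfolding y using set_nths_subset sx by (rule order_trans)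
    moreover have "1 * dotp v y = sgn (z!0) * dotp z y"
      by (rule dotp_mult_eq) (simp_all add: v_def)
    moreover have "dotp z y = dotp w x"
      unfolding z_def y by (rule dotp_nths_eq_if_zero_outside) (simp_all add: lw lx J_def)
    ultimately show "y \<in> perpB v"
      unfolding perpB_def using ort x lz by (simp add: v_def)
  qed
  moreover have "J \<subseteq> {..<length la}" unfolding J_def by auto
  moreover have lmu: "length mu = card J" unfolding mu_def using lz by simp
  moreover have "card J \<le> length la" using card_mono[OF finite_lessThan calculation(2)] by simp
  ultimately have "reduces la mu"
    unfolding reduces_def using vV by (intro conjI exI[of _ J] exI[of _ v]) auto
  then show ?thesis using Pmu lmu unfolding J_def by blast
qed

lemma not_rigid_strictly_reduces:
  assumes "\<not> perpB_rigid la"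
  shows "\<exists>mu. is_partition mu \<and> strictly_reduces la mu"
proof -
  obtain u i j where lu: "length u = length la" and ort: "\<forall>x\<in>perpB la. dotp u x = 0"
    and ij: "i < length la" "j < length la" "u!i * la!j \<noteq> u!j * la!i"
    using assms unfolding perpB_rigid_def proportional_def by blast
  define w where "w = map (\<lambda>t. la!j * u!t - u!j * la!t) [0..<length la]"
  have "length w = length la" unfolding w_def by simp
  moreover have "\<forall>x\<in>perpB la. dotp w x = 0"
    using dotp_linear_combination[OF lu] ort unfolding w_def perpB_def by simp
  moreover have "w!i \<noteq> 0" using ij unfolding w_def by (simp add: algebra_simps)
  ultimately obtain mu where mu: "is_partition mu" "reduces la mu"
    and lmu: "length mu = card {t. t < length la \<and> w!t \<noteq> 0}"
    using reduces_to_support ij(1) by blast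
  have "{t. t < length la \<and> w!t \<noteq> 0} \<subseteq> {..<length la} - {j}" using ij(2) unfolding w_def by auto
  then have "length mu \<le> length la - 1" unfolding lmu using ij(2) by (metis card_Diff_singleton
      card_lessThan card_mono finite_Diff finite_lessThan lessThan_iff)
  then have "length mu < length la" using ij(2) by linarith
  then have "\<not> reduces mu la" unfolding reduces_def by simp
  then show ?thesis using mu unfolding strictly_reduces_def by blast
qed

lemma orth_perpB_zero_extension:
  assumes I: "I \<subseteq> {..<length la}" "length v = card I" and proj: "Proj I ` perpB la \<subseteq> perpB v"
  obtains u where "length u = length la" "nths u I = v" "\<forall>t<length la. t \<notin> I \<longrightarrow> u!t = 0"
    "\<forall>x\<in>perpB la. dotp u x = 0"
proof -
  obtain u where lu: "length u = length la" and uv: "nths u I = v"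
    and u0: "\<forall>t<length la. t \<notin> I \<longrightarrow> u!t = 0"
    using exists_zero_extension[OF I] by blast
  have "dotp u x = 0" if x: "x \<in> perpB la" for x
  proof -
    have "length x = length la" using x unfolding perpB_def by simp
    moreover have "Proj I x \<in> perpB v" using proj x by blast
    ultimately show ?thesis
      using dotp_nths_eq_if_zero_outside[of u x I] lu u0 uv unfolding Proj_def perpB_def by simp
  qed
  then show ?thesis using that lu uv u0 by blast
qed

lemma rigid_orth_eq_0_if_zero_entry:
  assumes P: "is_partition la" and R: "perpB_rigid la" and lu: "length u = length la"
    and orth: "\<forall>x\<in>perpB la. dotp u x = 0" and t: "t < length la" "u!t = 0"
  shows "\<forall>s<length la. u!s = 0"
proof (intro allI impI)
  fix s assume s: "s < length la"
  have "proportional u la" using R lu orth unfolding perpB_rigid_def by blast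
  then have "u!s * la!t = u!t * la!s" using s t(1) unfolding proportional_def by blast
  then show "u!s = 0" using t partition_nth_pos[OF P t(1)] by simp
qed

lemma rigid_not_strictly_reduces:
  assumes P: "is_partition la" and R: "perpB_rigid la" and Pmu: "is_partition mu"
  shows "\<not> strictly_reduces la mu"
proof
  assume "strictly_reduces la mu"
  then have red: "reduces la mu" and not_red: "\<not> reduces mu la"
    unfolding strictly_reduces_def by auto
  obtain I v where I: "I \<subseteq> {..<length la}" "card I = length mu" and vV: "v \<in> Vset mu"
    and proj: "Proj I ` perpB la \<subseteq> perpB v" and mk: "length mu \<le> length la"
    using red unfolding reduces_def by blast
  obtain \<sigma> \<epsilon> where v0: "v!0 > 0" and \<sigma>: "\<sigma> permutes {..<length mu}"
    and \<epsilon>: "\<forall>i<length mu. \<epsilon> i \<in> {-1, 1}" and v: "v = signed_perm \<sigma> \<epsilon> mu"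
    using vV unfolding in_Vset_iff by blast
  have "length v = card I" using v I(2) by simp
  then obtain u where lu: "length u = length la" and uv: "nths u I = v"
    and u0: "\<forall>t<length la. t \<notin> I \<longrightarrow> u!t = 0" and orth: "\<forall>x\<in>perpB la. dotp u x = 0"
    using orth_perpB_zero_extension[OF I(1) _ proj] by blast
  show False
  proof (cases "length mu < length la")
    case True
    have "\<not> {..<length la} \<subseteq> I"
    proof
      assume "{..<length la} \<subseteq> I"
      then have "card {..<length la} \<le> card I"
        by (rule card_mono[OF finite_subset[OF I(1) finite_lessThan]])
      then show False using True I(2) by simp
    qed
    then obtain t where "t < length la" "t \<notin> I" by auto
    then have u_zero: "\<forall>s<length la. u!s = 0"
      using rigid_orth_eq_0_if_zero_entry[OF P R lu orth] u0 by blast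
    have "0 < length v" using v partition_length_pos[OF Pmu] by simp
    then have "v!0 \<in> set (nths u I)" unfolding uv by (rule nth_mem)
    then obtain s where "s < length la" "v!0 = u!s" unfolding set_nths lu by blast
    then show False using u_zero v0 by simp
  next
    case False
    then have mk': "length mu = length la" using mk by simp
    then have "I = {..<length la}" using I by (simp add: card_subset_eq)
    then have "u = v" using uv lu by (simp add: nths_upt_eq_take)
    then have "proportional (signed_perm \<sigma> \<epsilon> mu) la"
      using R lu orth v unfolding perpB_rigid_def by blast
    then have "\<forall>t<length la. la!0 * mu!t = mu!(\<sigma> 0) * la!t"
      using proportional_signed_perm_scale[OF P Pmu mk'] \<sigma> \<epsilon> mk' by simp
    moreover have "\<sigma> 0 < length mu"
      using permutes_in_image[OF \<sigma>] partition_length_pos[OF Pmu] by simp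
    then have "mu!(\<sigma> 0) > 0" using partition_nth_pos[OF Pmu] by fastforce
    moreover have "la!0 > 0" using partition_nth_pos[OF P partition_length_pos[OF P]] by simp
    ultimately have "perpB mu = perpB la"
      using perpB_eq_if_scaled[OF mk', of "la!0" "mu!(\<sigma> 0)"] mk' by simp
    then show False using not_red reduces_if_perpB_eq[OF P mk'] by blast
  qed
qed

lemma is_partition_map_div:
  assumes P: "is_partition la" and g: "g > 0" and dvd: "\<forall>x\<in>set la. g dvd x"
  shows "is_partition (map (\<lambda>x. x div g) la)"
proof -
  have "sorted_wrt (\<ge>) la" using P unfolding is_partition_def by simp
  moreover have "y div g \<le> x div g" if "y \<le> x" for x y using that g by (simp add: zdiv_mono1)
  ultimately have "sorted_wrt (\<ge>) (map (\<lambda>x. x div g) la)"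
    unfolding sorted_wrt_map by (rule sorted_wrt_mono_rel[rotated])
  moreover have "x div g \<ge> 1" if "x \<in> set la" for x
  proof -
    have "g * (x div g) = x" using dvd that by simp
    moreover have "x \<ge> 1" using P that unfolding is_partition_def by simp
    ultimately have "0 < g * (x div g)" by simp
    then show ?thesis using g by (simp add: zero_less_mult_iff)
  qed
  ultimately show ?thesis using P unfolding is_partition_def by auto
qed

lemma novel_Gcd_eq_1:
  assumes P: "is_partition la" and N: "novel la"
  shows "Gcd (set la) = 1"
proof (rule ccontr)
  define g where "g = Gcd (set la)"
  assume "Gcd (set la) \<noteq> 1"
  moreover have k0: "0 < length la" using partition_length_pos[OF P] .
  moreover have "g dvd la!0" unfolding g_def using k0 by (simp add: Gcd_dvd)
  moreover have "la!0 \<ge> 1" using partition_nth_pos[OF P k0] .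
  moreover have "g \<ge> 0" unfolding g_def by simp
  ultimately have g2: "g \<ge> 2" unfolding g_def by (smt (verit) dvd_0_left_iff)
  define mu where "mu = map (\<lambda>x. x div g) la"
  have Pmu: "is_partition mu"
    unfolding mu_def using is_partition_map_div[OF P] g2 by (simp add: g_def Gcd_dvd)
  have lmu: "length mu = length la" unfolding mu_def by simp
  have la_mu: "la!i = g * mu!i" if "i < length la" for i
    unfolding mu_def g_def using that by (simp add: Gcd_dvd)
  have "perpB mu = perpB la"
    by (rule perpB_eq_if_scaled[where p = g and q = 1]) (use lmu la_mu g2 in auto)
  then have "equivalent mu la"
    unfolding equivalent_def using lmu partition_in_Vset[OF P] by auto
  then have "lex_le la mu" using N Pmu unfolding novel_def by blast
  moreover have "mu!0 < la!0"
  proof -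
    have "mu!0 \<ge> 1" using partition_nth_pos[OF Pmu] lmu k0 by simp
    moreover have "2 * mu!0 \<le> g * mu!0" using g2 calculation by (intro mult_right_mono) auto
    ultimately show ?thesis using la_mu[OF k0] by linarith
  qed
  ultimately show False using not_lex_le_if_nth0_less by blast
qed

lemma dvd_if_Gcd_eq_1:
  fixes a c :: int
  assumes "Gcd A = 1" "\<forall>x\<in>A. a dvd c * x"
  shows "a dvd c"
proof -
  have "a dvd Gcd ((*) c ` A)" using assms(2) by (auto intro: Gcd_greatest)
  then show ?thesis using assms(1) by (simp add: Gcd_mult)
qed

lemma rigid_lex_le_equivalent:
  assumes P: "is_partition la" and R: "perpB_rigid la" and g1: "Gcd (set la) = 1"
    and Pmu: "is_partition mu" and E: "equivalent mu la"
  shows "lex_le la mu"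
proof -
  obtain w where lmu: "length mu = length la" and wV: "w \<in> Vset la" and pw: "perpB mu = perpB w"
    using E unfolding equivalent_def by auto
  obtain \<sigma> \<epsilon> where \<sigma>: "\<sigma> permutes {..<length la}" and \<epsilon>: "\<forall>i<length la. \<epsilon> i \<in> {-1, 1}"
    and w: "w = signed_perm \<sigma> \<epsilon> la"
    using wV unfolding in_Vset_iff by blast
  define \<tau> where "\<tau> = Hilbert_Choice.inv \<sigma>"
  define u where "u = signed_perm \<tau> (\<epsilon> \<circ> \<tau>) mu"
  have \<tau>: "\<tau> permutes {..<length la}" unfolding \<tau>_def using permutes_inv[OF \<sigma>] .
  have \<epsilon>\<tau>: "\<forall>i<length la. (\<epsilon> \<circ> \<tau>) i \<in> {-1, 1}" using \<epsilon> permutes_in_image[OF \<tau>] by simp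
  have mu_u: "signed_perm \<sigma> \<epsilon> u = mu"
    unfolding u_def \<tau>_def using signed_perm_inverse[of \<sigma> mu \<epsilon>] \<sigma> \<epsilon> lmu by simp
  have "dotp u y = 0" if y: "y \<in> perpB la" for y
  proof -
    have "signed_perm \<sigma> \<epsilon> y \<in> perpB mu" using signed_perm_perpB[OF \<sigma> \<epsilon> y] pw w by simp
    then have "dotp mu (signed_perm \<sigma> \<epsilon> y) = 0" unfolding perpB_def by simp
    moreover have "length y = length la" using y unfolding perpB_def by simp
    ultimately show ?thesis
      using dotp_signed_perm[of \<sigma> u \<epsilon> y] \<sigma> \<epsilon> lmu mu_u unfolding u_def by simp
  qed
  then have "proportional u la" using R lmu unfolding perpB_rigid_def u_def by simp
  then have scale: "\<forall>t<length la. la!0 * mu!t = mu!(\<tau> 0) * la!t"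
    using proportional_signed_perm_scale[OF P Pmu lmu \<tau> \<epsilon>\<tau>] unfolding u_def by blast
  have k0: "0 < length la" using partition_length_pos[OF P] .
  have la0: "la!0 \<ge> 1" using partition_nth_pos[OF P k0] .
  have "mu!(\<tau> 0) \<ge> 1" using partition_nth_pos[OF Pmu] permutes_in_image[OF \<tau>] k0 lmu by simp
  moreover have "la!0 dvd mu!(\<tau> 0)"
    using dvd_if_Gcd_eq_1[OF g1] scale by (metis dvd_triv_left in_set_conv_nth)
  ultimately obtain d where d: "mu!(\<tau> 0) = la!0 * d" and d1: "d \<ge> 1"
    using la0 by (metis dvdE int_one_le_iff_zero_less zero_less_mult_pos)
  have mu_d: "mu!t = d * la!t" if "t < length la" for t
    using scale that d la0 by (simp add: mult.assoc)
  show ?thesis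
  proof (cases "d = 1")
    case True
    then have "mu = la" using mu_d lmu by (simp add: list_eq_iff_nth_eq)
    then show ?thesis unfolding lex_le_def by simp
  next
    case False
    then have "la!0 < mu!0" using mu_d[OF k0] d1 la0 by (simp add: mult_less_cancel_right1)
    then show ?thesis using lex_le_if_nth0_less[of la mu] k0 lmu by simp
  qed
qed

lemma novel_iff_rigid_Gcd:
  assumes P: "is_partition la" and ne: "perpB la \<noteq> {}"
  shows "novel la \<longleftrightarrow> perpB_rigid la \<and> Gcd (set la) = 1"
proof
  assume N: "novel la"
  then have "perpB_rigid la" using not_rigid_strictly_reduces unfolding novel_def by blast
  then show "perpB_rigid la \<and> Gcd (set la) = 1" using novel_Gcd_eq_1[OF P N] by simp
next
  assume "perpB_rigid la \<and> Gcd (set la) = 1"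
  then show "novel la"
    unfolding novel_def using ne rigid_not_strictly_reduces[OF P] rigid_lex_le_equivalent[OF P]
    by blast
qed

section \<open>The rank of A^(lambda)\<close>

context vec_space
begin

lemma scalar_prod_span_eq_0:
  assumes z: "z \<in> carrier_vec n" and S: "S \<subseteq> carrier_vec n" and orth: "\<forall>s\<in>S. s \<bullet> z = 0"
    and v: "v \<in> span S"
  shows "v \<bullet> z = 0"
proof -
  let ?N = "{x \<in> carrier_vec n. x \<bullet> z = 0}"
  have "LinearCombinations.submodule class_ring ?N V"
    unfolding LinearCombinations.submodule_def
  proof (intro conjI allI impI)
    show "module class_ring V" by unfold_locales
    fix a b assume "a \<in> ?N" "b \<in> ?N"
    then show "a \<oplus>\<^bsub>V\<^esub> b \<in> ?N" using z by (auto simp: add_scalar_prod_distrib[of _ n])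
  next
    fix c :: 'a and x assume "c \<in> carrier class_ring" "x \<in> ?N"
    then show "c \<odot>\<^bsub>V\<^esub> x \<in> ?N" using z by auto
  qed (use z in auto)
  moreover have "S \<subseteq> ?N" using S orth by auto
  ultimately show ?thesis using span_is_subset v by blast
qed

lemma lin_indpt_insert_orthogonal:
  assumes S: "S \<subseteq> carrier_vec n" "lin_indpt S"
    and z: "z \<in> carrier_vec n" "z \<bullet> z \<noteq> 0" and orth: "\<forall>s\<in>S. s \<bullet> z = 0"
  shows "z \<notin> S" "lin_indpt (insert z S)"
proof -
  have "z \<notin> span S" using scalar_prod_span_eq_0[OF z(1) S(1) orth] z(2) by blast
  moreover show "z \<notin> S" using orth z(2) by blast
  ultimately show "lin_indpt (insert z S)"
    using lin_dep_iff_in_span[OF S z(1)] by simp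
qed

lemma card_lin_indpt_orthogonal_less:
  assumes S: "S \<subseteq> carrier_vec n" "lin_indpt S"
    and z: "z \<in> carrier_vec n" "z \<bullet> z \<noteq> 0" and orth: "\<forall>s\<in>S. s \<bullet> z = 0"
  shows "card S < n"
proof -
  have "card (insert z S) \<le> n" and "finite S"
    using li_le_dim[of "insert z S"] lin_indpt_insert_orthogonal[OF assms] S z(1) dim_is_n by auto
  then show ?thesis using lin_indpt_insert_orthogonal(1)[OF assms] by simp
qed

lemma span_of_maximal_lin_indpt:
  assumes C: "C \<subseteq> carrier_vec n" and M: "maximal S (\<lambda>T. T \<subseteq> C \<and> lin_indpt T)"
  shows "C \<subseteq> span S"
proof
  fix c assume c: "c \<in> C"
  have S: "S \<subseteq> C" "lin_indpt S" using M unfolding maximal_def by auto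
  then have Sc: "S \<subseteq> carrier_vec n" using C by auto
  show "c \<in> span S"
  proof (cases "c \<in> S")
    case True
    then show ?thesis using in_own_span[OF Sc] by auto
  next
    case False
    show ?thesis
    proof (rule ccontr)
      assume "c \<notin> span S"
      then have "lin_indpt (S \<union> {c})" using lin_dep_iff_in_span[OF Sc S(2)] False c C by blast
      moreover have "S \<union> {c} \<subseteq> C" using S c by auto
      ultimately have "S \<union> {c} = S" using M unfolding maximal_def by blast
      then show False using False by auto
    qed
  qed
qed

lemma rank_eq_card_maximal:
  assumes "A \<in> carrier_mat n nc"
  obtains S where "maximal S (\<lambda>T. T \<subseteq> set (cols A) \<and> lin_indpt T)" "rank A = card S"
proof -
  have "lin_indpt {}" unfolding lin_dep_def by auto
  moreover have "finite T \<and> card T \<le> card (set (cols A))" if "T \<subseteq> set (cols A)" for T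
    using that card_mono finite_subset by blast
  ultimately obtain S where "maximal S (\<lambda>T. T \<subseteq> set (cols A) \<and> lin_indpt T)"
    using maximal_exists[of "\<lambda>T. T \<subseteq> set (cols A) \<and> lin_indpt T" "card (set (cols A))" "{}"]
    by blast
  then show ?thesis using that rank_card_indpt[OF assms] by blast
qed

end

lemma exists_nonzero_orthogonal:
  fixes T :: "'a :: idom vec list"
  assumes T: "set T \<subseteq> carrier_vec n" and lt: "length T < n"
  shows "\<exists>z\<in>carrier_vec n. z \<noteq> 0\<^sub>v n \<and> (\<forall>t\<in>set T. t \<bullet> z = 0)"
proof -
  have Tn: "T!i \<in> carrier_vec n" if "i < length T" for i using T that nth_mem by blast
  define c where "c i = (if i < length T then T!i else 0\<^sub>v n)" for i
  define Q where "Q = mat\<^sub>r n n (\<lambda>i. if i = n - 1 then 0\<^sub>v n else c i)"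
  have Q: "Q \<in> carrier_mat n n" unfolding Q_def by simp
  have "det Q = 0" unfolding Q_def
    by (rule det_row_0) (use lt Tn in \<open>auto simp: c_def\<close>)
  then obtain z where z: "z \<in> carrier_vec n" "z \<noteq> 0\<^sub>v n" "Q *\<^sub>v z = 0\<^sub>v n"
    using det_0_iff_vec_prod_zero[OF Q] by blast
  have "T!i \<bullet> z = 0" if "i < length T" for i
  proof -
    have "(Q *\<^sub>v z) $ i = 0" using z(3) that lt by simp
    moreover have "row Q i = T!i" unfolding Q_def c_def using that lt Tn by (auto simp: row_mat_of_row_fun)
    ultimately show ?thesis using that lt Q by simp
  qed
  then have "\<forall>t\<in>set T. t \<bullet> z = 0" by (metis in_set_conv_nth)
  then show ?thesis using z(1,2) by blast
qed

definition of_int_vec :: "int list \<Rightarrow> 'a :: ring_1 vec" where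
  "of_int_vec c = vec (length c) (\<lambda>i. of_int (c!i))"

lemma of_int_vec_carrier [simp]: "of_int_vec c \<in> carrier_vec (length c)"
  unfolding of_int_vec_def by simp

lemma scalar_prod_of_int_vec:
  "length a = length b \<Longrightarrow>
   of_int_vec a \<bullet> (of_int_vec b :: 'a :: comm_ring_1 vec) = of_int (dotp a b)"
  unfolding of_int_vec_def scalar_prod_def dotp_def by (simp add: atLeast0LessThan)

lemma of_int_vec_list_of_vec: "of_int_vec (list_of_vec z) = (z :: int vec)"
  unfolding of_int_vec_def by (auto simp: list_of_vec_index)

lemma finite_Acols: "finite (Acols l)"
proof (rule finite_subset)
  show "Acols l \<subseteq> {x. set x \<subseteq> {-1, 1} \<and> length x = length l}"
    unfolding Acols_def perpB_def by auto
qed (simp add: finite_lists_length_eq)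

lemma Amat_carrier: "Amat l \<in> carrier_mat (length l) (dim_col (Amat l))"
  unfolding Amat_def Let_def by simp

lemma cols_Amat_carrier: "set (cols (Amat l)) \<subseteq> carrier_vec (length l)"
  using cols_dim[of "Amat l"] Amat_carrier[of l] by simp

lemma set_cols_Amat: "set (cols (Amat l)) = of_int_vec ` Acols l"
proof -
  define cs where "cs = (SOME cs. distinct cs \<and> set cs = Acols l)"
  have "\<exists>cs. distinct cs \<and> set cs = Acols l" using finite_distinct_list[OF finite_Acols] by blast
  then have cs: "set cs = Acols l" unfolding cs_def by (metis (mono_tags, lifting) someI_ex)
  have len: "length c = length l" if "c \<in> set cs" for c
    using that cs unfolding Acols_def perpB_def by auto
  have "cols (Amat l) = map of_int_vec cs"
    unfolding Amat_def Let_def cs_def[symmetric]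
    by (rule nth_equalityI) (auto simp: col_def of_int_vec_def len intro!: eq_vecI)
  then show ?thesis using cs by simp
qed

lemma cols_Amat_orthogonal:
  assumes "length w = length l" "\<forall>x\<in>perpB l. dotp w x = 0"
  shows "\<forall>c\<in>set (cols (Amat l)). c \<bullet> of_int_vec w = 0"
proof
  fix c assume "c \<in> set (cols (Amat l))"
  then obtain x where x: "x \<in> perpB l" and c: "c = of_int_vec x"
    unfolding set_cols_Amat Acols_def by auto
  have "length x = length w" using x assms(1) unfolding perpB_def by simp
  then show "c \<bullet> of_int_vec w = 0"
    using assms(2) x unfolding c by (simp add: scalar_prod_of_int_vec dotp_commute)
qed

lemma orth_perpB_if_orth_Acols:
  assumes lu: "length u = length la" and k0: "0 < length la"
    and orth: "\<forall>x\<in>Acols la. dotp u x = 0"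
  shows "\<forall>x\<in>perpB la. dotp u x = 0"
proof
  fix x assume x: "x \<in> perpB la"
  have lx: "length x = length la" and sx: "set x \<subseteq> {-1, 1}" and dx: "dotp la x = 0"
    using x unfolding perpB_def by auto
  have neg: "dotp v (map uminus x) = - dotp v x" if "length v = length x" for v
    unfolding dotp_def using that by (simp add: sum_negf[symmetric])
  have "x!0 \<in> set x" using lx k0 by simp
  then consider "x!0 = 1" | "x!0 = -1" using sx by blast
  then show "dotp u x = 0"
  proof cases
    case 1
    then have "x \<in> Acols la" unfolding Acols_def using x by simp
    then show ?thesis using orth by blast
  next
    case 2
    have "set (map uminus x) \<subseteq> {-1, 1}" using sx by auto
    moreover have "dotp la (map uminus x) = 0" using neg[of la] lx dx by simp
    ultimately have "map uminus x \<in> Acols la"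
      unfolding Acols_def perpB_def using lx k0 2 by simp
    then have "dotp u (map uminus x) = 0" using orth by blast
    then show ?thesis using neg[of u] lu lx by simp
  qed
qed

lemma rank_Amat_less:
  assumes P: "is_partition la"
  shows "vec_space.rank (length la) (Amat la) < length la"
proof -
  interpret V: vec_space "TYPE(real)" "length la" .
  obtain S where M: "maximal S (\<lambda>T. T \<subseteq> set (cols (Amat la)) \<and> V.lin_indpt T)"
    and rk: "V.rank (Amat la) = card S"
    using V.rank_eq_card_maximal[OF Amat_carrier] .
  have "S \<subseteq> carrier_vec (length la)" "V.lin_indpt S"
    using M cols_Amat_carrier unfolding maximal_def by auto
  moreover have "\<forall>s\<in>S. s \<bullet> of_int_vec la = 0"
    using M cols_Amat_orthogonal[of la la] unfolding maximal_def perpB_def by blast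
  moreover have "of_int_vec la \<bullet> (of_int_vec la :: real vec) \<noteq> 0"
    using partition_dotp_self_pos[OF P] by (simp add: scalar_prod_of_int_vec)
  ultimately have "card S < length la"
    by (intro V.card_lin_indpt_orthogonal_less[of S "of_int_vec la"]) auto
  then show ?thesis using rk by simp
qed

lemma not_rigid_witness:
  assumes P: "is_partition la" and R: "\<not> perpB_rigid la"
  obtains w where "length w = length la" "\<forall>x\<in>perpB la. dotp w x = 0" "dotp w la = 0"
    "\<exists>t<length la. w!t \<noteq> 0"
proof -
  obtain u where lu: "length u = length la" and ort: "\<forall>x\<in>perpB la. dotp u x = 0"
    and npr: "\<not> proportional u la"
    using R unfolding perpB_rigid_def by blast
  define a where "a = dotp la la"
  define b where "b = dotp u la"
  define w where "w = map (\<lambda>t. a * u!t - b * la!t) [0..<length la]"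
  have dw: "dotp w x = a * dotp u x - b * dotp la x" for x
    unfolding w_def using dotp_linear_combination[OF lu] by simp
  have a0: "a > 0" unfolding a_def using partition_dotp_self_pos[OF P] .
  have "\<exists>t<length la. w!t \<noteq> 0"
  proof (rule ccontr)
    assume "\<not> (\<exists>t<length la. w!t \<noteq> 0)"
    then have au: "a * u!t = b * la!t" if "t < length la" for t using that unfolding w_def by simp
    have "u!i * la!j = u!j * la!i" if "i < length la" "j < length la" for i j
    proof -
      have "a * (u!i * la!j) = (a * u!i) * la!j" by (simp add: mult.assoc)
      also have "\<dots> = (b * la!j) * la!i" using au[OF that(1)] by (simp add: ac_simps)
      also have "\<dots> = a * (u!j * la!i)" using au[OF that(2)] by (simp add: ac_simps)
      finally show ?thesis using a0 by simp
    qed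
    then show False using npr unfolding proportional_def by blast
  qed
  moreover have "length w = length la" unfolding w_def by simp
  moreover have "\<forall>x\<in>perpB la. dotp w x = 0" using dw ort unfolding perpB_def by simp
  moreover have "dotp w la = 0" unfolding dw a_def b_def by simp
  ultimately show ?thesis using that by blast
qed

lemma rank_Amat_add_one_less_if_not_rigid:
  assumes P: "is_partition la" and R: "\<not> perpB_rigid la"
  shows "vec_space.rank (length la) (Amat la) + 1 < length la"
proof -
  interpret V: vec_space "TYPE(real)" "length la" .
  obtain w where lw: "length w = length la" and w_orth: "\<forall>x\<in>perpB la. dotp w x = 0"
    and w_la: "dotp w la = 0" and "\<exists>t<length la. w!t \<noteq> 0"
    using not_rigid_witness[OF P R] .
  then obtain t where "t < length w" "w!t \<noteq> 0" using lw by auto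
  then have "dotp w w > 0" by (rule dotp_self_pos)
  then have W: "of_int_vec w \<bullet> (of_int_vec w :: real vec) \<noteq> 0"
    by (simp add: scalar_prod_of_int_vec)
  have W_carrier: "of_int_vec w \<in> carrier_vec (length la)" using of_int_vec_carrier[of w] lw by simp
  obtain S where M: "maximal S (\<lambda>T. T \<subseteq> set (cols (Amat la)) \<and> V.lin_indpt T)"
    and rk: "V.rank (Amat la) = card S"
    using V.rank_eq_card_maximal[OF Amat_carrier] .
  have S: "S \<subseteq> carrier_vec (length la)" "V.lin_indpt S"
    using M cols_Amat_carrier unfolding maximal_def by auto
  have "finite S" using M finite_subset unfolding maximal_def by blast
  have "\<forall>s\<in>S. s \<bullet> of_int_vec la = 0"
    using M cols_Amat_orthogonal[of la la] unfolding maximal_def perpB_def by blast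
  moreover have "of_int_vec la \<bullet> (of_int_vec la :: real vec) \<noteq> 0"
    using partition_dotp_self_pos[OF P] by (simp add: scalar_prod_of_int_vec)
  ultimately have L: "of_int_vec la \<notin> S" "V.lin_indpt (insert (of_int_vec la) S)"
    using V.lin_indpt_insert_orthogonal[OF S(1,2) of_int_vec_carrier] by auto
  have "of_int_vec la \<bullet> (of_int_vec w :: real vec) = 0"
    using w_la lw by (simp add: scalar_prod_of_int_vec dotp_commute)
  then have "\<forall>s\<in>insert (of_int_vec la) S. s \<bullet> of_int_vec w = 0"
    using M cols_Amat_orthogonal[OF lw w_orth] unfolding maximal_def by auto
  then have "card (insert (of_int_vec la) S) < length la"
    using V.card_lin_indpt_orthogonal_less[OF _ L(2) W_carrier W] S(1) by simp
  then show ?thesis using L(1) \<open>finite S\<close> rk by simp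
qed

lemma exists_int_orth_columns:
  assumes S: "S \<subseteq> of_int_vec ` Acols la" "finite S" and card_S: "card S + 1 < length la"
  obtains u where "length u = length la" "\<exists>t<length la. u!t \<noteq> 0" "dotp u la = 0"
    "\<forall>s\<in>S. s \<bullet> (of_int_vec u :: real vec) = 0"
proof -
  define k where "k = length la"
  have "\<forall>s\<in>S. \<exists>c. c \<in> Acols la \<and> s = of_int_vec c" using S(1) by blast
  then obtain f where f: "\<forall>s\<in>S. f s \<in> Acols la \<and> s = of_int_vec (f s)"
    by (metis (no_types) bchoice)
  obtain sl where sl: "set sl = S" "distinct sl" using finite_distinct_list[OF S(2)] by blast
  define cl where "cl = map f sl"
  have len_cl: "length c = k" if "c \<in> set (la # cl)" for c
    using that f sl(1) unfolding cl_def k_def Acols_def perpB_def by auto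
  \<comment> \<open>The orthogonal vector is found over the integers, so that it can be fed to rigidity.\<close>
  define T :: "int vec list" where "T = map of_int_vec (la # cl)"
  have "set T \<subseteq> carrier_vec k"
  proof
    fix t assume "t \<in> set T"
    then obtain c where "c \<in> set (la # cl)" "t = of_int_vec c" unfolding T_def by auto
    then show "t \<in> carrier_vec k" using len_cl of_int_vec_carrier[of c] by simp
  qed
  moreover have "length T < k"
    unfolding T_def cl_def using card_S distinct_card[OF sl(2)] sl(1) k_def by simp
  ultimately obtain z where z: "z \<in> carrier_vec k" "z \<noteq> 0\<^sub>v k" and zT: "\<forall>t\<in>set T. t \<bullet> z = 0"
    using exists_nonzero_orthogonal by blast
  define u where "u = list_of_vec z"
  have lu: "length u = k" unfolding u_def using z(1) by simp
  have int_orth: "dotp c u = 0" if "c \<in> set (la # cl)" for c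
  proof -
    have "(of_int_vec c :: int vec) \<bullet> z = 0" using zT that unfolding T_def by auto
    then show ?thesis using scalar_prod_of_int_vec[of c u, where 'a = int] len_cl[OF that] lu
      unfolding u_def by (simp add: of_int_vec_list_of_vec)
  qed
  have "\<forall>s\<in>S. s \<bullet> of_int_vec u = 0"
  proof
    fix s assume s: "s \<in> S"
    then have "f s \<in> set cl" unfolding cl_def using sl(1) by simp
    then have "dotp (f s) u = 0" "length (f s) = k" using int_orth len_cl by auto
    then have "of_int_vec (f s) \<bullet> (of_int_vec u :: real vec) = 0"
      using lu by (simp add: scalar_prod_of_int_vec)
    then show "s \<bullet> of_int_vec u = 0" using f s by metis
  qed
  moreover have "\<exists>t<k. u!t \<noteq> 0"
  proof (rule ccontr)
    assume "\<not> (\<exists>t<k. u!t \<noteq> 0)"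
    then have "z = 0\<^sub>v k"
      using z(1) unfolding u_def by (intro eq_vecI) (simp_all add: list_of_vec_index)
    then show False using z(2) by contradiction
  qed
  moreover have "dotp u la = 0" using int_orth[of la] lu len_cl by (simp add: dotp_commute)
  ultimately show ?thesis using that lu unfolding k_def by blast
qed

lemma not_rigid_if_rank_Amat_less:
  assumes P: "is_partition la" and rk_less: "vec_space.rank (length la) (Amat la) + 1 < length la"
  shows "\<not> perpB_rigid la"
proof
  assume R: "perpB_rigid la"
  interpret V: vec_space "TYPE(real)" "length la" .
  obtain S where M: "maximal S (\<lambda>T. T \<subseteq> set (cols (Amat la)) \<and> V.lin_indpt T)"
    and rk: "V.rank (Amat la) = card S"
    using V.rank_eq_card_maximal[OF Amat_carrier] .
  have "S \<subseteq> of_int_vec ` Acols la" using M unfolding maximal_def set_cols_Amat by blast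
  moreover have "finite S" using M finite_subset unfolding maximal_def by blast
  ultimately obtain u where lu: "length u = length la" and nz: "\<exists>t<length la. u!t \<noteq> 0"
    and u_la: "dotp u la = 0" and u_S: "\<forall>s\<in>S. s \<bullet> (of_int_vec u :: real vec) = 0"
    using exists_int_orth_columns rk_less rk by metis
  have S_carrier: "S \<subseteq> carrier_vec (length la)"
    using M cols_Amat_carrier unfolding maximal_def by auto
  have U: "of_int_vec u \<in> carrier_vec (length la)" using of_int_vec_carrier[of u] lu by simp
  have "set (cols (Amat la)) \<subseteq> V.span S"
    by (rule V.span_of_maximal_lin_indpt[OF cols_Amat_carrier M])
  then have "\<forall>c\<in>set (cols (Amat la)). c \<bullet> of_int_vec u = 0"
    using V.scalar_prod_span_eq_0[OF U S_carrier u_S] by blast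
  then have "\<forall>x\<in>Acols la. dotp u x = 0"
    using set_cols_Amat lu unfolding Acols_def perpB_def
    by (auto simp: scalar_prod_of_int_vec dotp_commute)
  then have "\<forall>x\<in>perpB la. dotp u x = 0"
    using orth_perpB_if_orth_Acols lu partition_length_pos[OF P] by blast
  then have "proportional u la" using R lu unfolding perpB_rigid_def by blast
  then have "\<forall>j<length la. u!j = 0" using proportional_orth_eq_0[OF P lu] u_la by blast
  then show False using nz by blast
qed

lemma rank_Amat_iff_rigid:
  assumes "is_partition la"
  shows "vec_space.rank (length la) (Amat la) = length la - 1 \<longleftrightarrow> perpB_rigid la"
  using rank_Amat_less[OF assms] rank_Amat_add_one_less_if_not_rigid[OF assms]
    not_rigid_if_rank_Amat_less[OF assms] by linarith

theorem mainTheorem3: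
  fixes la :: "int list"
  assumes "is_partition la"
    and "perpB la \<noteq> {}"
  shows "novel la \<longleftrightarrow>
           vec_space.rank (length la) (Amat la) = length la - 1 \<and> Gcd (set la) = 1"
  using novel_iff_rigid_Gcd[OF assms] rank_Amat_iff_rigid[OF assms(1)] by simp

end
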